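(* Let $f^*$ be a symmetric interpolation of a connectivity function $f$ on a finite set $V$. Let $S,T$ be disjoint subsets of $V$. If there exist distinct elements $a_1,\dots,a_\ell,b_1,\dots,b_\ell$ in $V-(S\cup T)$ such that (i) $f^*(S\cup\{a_i\},T\cup\{b_i\})>f^*(S,T)$ for all $i\in\{1,\dots,\ell\}$, (ii) $f^*(S\cup\{a_i\},T\cup\{b_j\})=f^*(S,T)$ for all $1\le i<j\le\ell$, (iii) $f^*(S\cup\{b_i\},T\cup\{a_j\})=f^*(S,T)$ for all $i,j\in\{1,\dots,\ell\}$, and (iv) $f^*(S\cup\{a_i\},T)=f^*(S,T\cup\{b_i\})=f^*(S,T)$ for all $i\in\{1,\dots,\ell\}$, then $\ell\le 2f^*(S,T)$.
   Context: A connectivity function on a finite set $V$ is a function $f:2^V\to\mathbb Z$ such that $f(X)=f(V-X)$ for all $X\subseteq V$, $f(X)+f(Y)\ge f(X\cup Y)+f(X\cap Y)$ for all $X,Y\subseteq V$, and $f(\emptyset)=0$. An interpolation of $f$ is a function $f^*$ defined on pairs $(X,Y)$ of disjoint subsets of $V$, with integer values, such that (i) $f^*(X,V-X)=f(X)$ for all $X\subseteq V$; (ii) if $C\cap D=\emptyset$, $A\subseteq C$, $B\subseteq D$ then $f^*(A,B)\le f^*(C,D)$; (iii) $f^*(A,B)+f^*(C,D)\ge f^*(A\cap C,B\cup D)+f^*(A\cup C,B\cap D)$ for all such pairs; (iv) $f^*(\emptyset,\emptyset)=f(\emptyset)$. The interpolation is symmetric if $f^*(X,Y)=f^*(Y,X)$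 for all disjoint $X,Y\subseteq V$. *)

theory Defs
  imports Main
begin

definition connectivity_function :: "'a set \<Rightarrow> ('a set \<Rightarrow> int) \<Rightarrow> bool" where
  "connectivity_function V f \<longleftrightarrow>
     (\<forall>X. X \<subseteq> V \<longrightarrow> f X = f (V - X)) \<and>
     (\<forall>X Y. X \<subseteq> V \<longrightarrow> Y \<subseteq> V \<longrightarrow> f X + f Y \<ge> f (X \<union> Y) + f (X \<inter> Y)) \<and>
     f {} = 0"

definition disj_pair :: "'a set \<Rightarrow> 'a set \<Rightarrow> 'a set \<Rightarrow> bool" where
  "disj_pair V X Y \<longleftrightarrow> X \<subseteq> V \<and> Y \<subseteq> V \<and> X \<inter> Y = {}"

definition interpolation ::
  "'a set \<Rightarrow> ('a set \<Rightarrow> int) \<Rightarrow> ('a set \<Rightarrow> 'a set \<Rightarrow> int) \<Rightarrow> bool" where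
  "interpolation V f fs \<longleftrightarrow>
     (\<forall>X. X \<subseteq> V \<longrightarrow> fs X (V - X) = f X) \<and>
     (\<forall>A B C D. disj_pair V C D \<longrightarrow> A \<subseteq> C \<longrightarrow> B \<subseteq> D \<longrightarrow> fs A B \<le> fs C D) \<and>
     (\<forall>A B C D. disj_pair V A B \<longrightarrow> disj_pair V C D \<longrightarrow>
        fs A B + fs C D \<ge> fs (A \<inter> C) (B \<union> D) + fs (A \<union> C) (B \<inter> D)) \<and>
     fs {} {} = f {}"

definition symmetric_interpolation ::
  "'a set \<Rightarrow> ('a set \<Rightarrow> int) \<Rightarrow> ('a set \<Rightarrow> 'a set \<Rightarrow> int) \<Rightarrow> bool" where
  "symmetric_interpolation V f fs \<longleftrightarrow> interpolation V f fs \<and>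
     (\<forall>X Y. disj_pair V X Y \<longrightarrow> fs X Y = fs Y X)"

end

theory Submission
  imports Defs
begin

text \<open>
  Let \<open>k = f*(S,T)\<close>. By monotonicity and submodularity, the pairs \<open>(X,Y) \<ge> (S,T)\<close> with
  \<open>f*(X,Y) = k\<close> are closed under meets and joins, so hypotheses (ii)--(iv) make
  \<open>(S \<union> {a\<^sub>1..a\<^sub>m}, T \<union> {b\<^sub>m\<^sub>+\<^sub>1..b\<^sub>l})\<close> and \<open>(S \<union> {b\<^sub>1..b\<^sub>l}, T \<union> {a\<^sub>1..a\<^sub>l})\<close> tight.
  Submodularity against the first of these, together with (i), shows that
  \<open>m \<mapsto> f*({a\<^sub>1..a\<^sub>m}, S \<union> T \<union> {b\<^sub>1..b\<^sub>l})\<close> increases strictly, so its value at \<open>l\<close> is at least \<open>l\<close>.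
  Submodularity applied to \<open>(S \<union> {a\<^sub>1..a\<^sub>l}, T)\<close> and, by symmetry, \<open>(T \<union> {a\<^sub>1..a\<^sub>l}, S \<union> {b\<^sub>1..b\<^sub>l})\<close>
  bounds that value by \<open>2k\<close>.
\<close>

lemma interpolation_mono:
  "interpolation V f fs \<Longrightarrow> disj_pair V C D \<Longrightarrow> A \<subseteq> C \<Longrightarrow> B \<subseteq> D \<Longrightarrow> fs A B \<le> fs C D"
  unfolding interpolation_def by blast

lemma interpolation_submodular:
  "interpolation V f fs \<Longrightarrow> disj_pair V A B \<Longrightarrow> disj_pair V C D \<Longrightarrow>
    fs (A \<inter> C) (B \<union> D) + fs (A \<union> C) (B \<inter> D) \<le> fs A B + fs C D"
  unfolding interpolation_def by blast

lemma interpolation_nonneg: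
  assumes "interpolation V f fs" "connectivity_function V f" "disj_pair V X Y"
  shows "0 \<le> fs X Y"
proof -
  have "fs {} {} = f {}" "f {} = 0"
    using assms(1,2) unfolding interpolation_def connectivity_function_def by blast+
  moreover have "fs {} {} \<le> fs X Y"
    by (rule interpolation_mono[OF assms(1,3)]) simp_all
  ultimately show ?thesis by simp
qed

text \<open>By monotonicity \<open>fs S T\<close> is the least value of \<open>fs\<close> on pairs containing \<open>(S, T)\<close>;
  the tight pairs are those attaining it.\<close>
definition tight_pair ::
  "'a set \<Rightarrow> ('a set \<Rightarrow> 'a set \<Rightarrow> int) \<Rightarrow> 'a set \<Rightarrow> 'a set \<Rightarrow> 'a set \<Rightarrow> 'a set \<Rightarrow> bool" where
  "tight_pair V fs S T X Y \<longleftrightarrow> disj_pair V X Y \<and> S \<subseteq> X \<and> T \<subseteq> Y \<and> fs X Y = fs S T"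

lemma tight_pair_refl: "disj_pair V S T \<Longrightarrow> tight_pair V fs S T S T"
  unfolding tight_pair_def by simp

lemma
  assumes interp: "interpolation V f fs"
    and AB: "tight_pair V fs S T A B" and CD: "tight_pair V fs S T C D"
  shows tight_pair_meet: "tight_pair V fs S T (A \<inter> C) (B \<union> D)"
    and tight_pair_join: "tight_pair V fs S T (A \<union> C) (B \<inter> D)"
proof -
  have disj: "disj_pair V (A \<inter> C) (B \<union> D)" "disj_pair V (A \<union> C) (B \<inter> D)"
    using AB CD unfolding tight_pair_def disj_pair_def by auto
  have "fs S T \<le> fs (A \<inter> C) (B \<union> D)" "fs S T \<le> fs (A \<union> C) (B \<inter> D)"
    using AB CD interpolation_mono[OF interp disj(1), of S T]
      interpolation_mono[OF interp disj(2), of S T]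
    unfolding tight_pair_def by auto
  moreover have "fs (A \<inter> C) (B \<union> D) + fs (A \<union> C) (B \<inter> D) \<le> fs A B + fs C D"
    using AB CD interpolation_submodular[OF interp] unfolding tight_pair_def by blast
  ultimately show "tight_pair V fs S T (A \<inter> C) (B \<union> D)" "tight_pair V fs S T (A \<union> C) (B \<inter> D)"
    using AB CD disj unfolding tight_pair_def by auto
qed

lemma tight_pair_Un_right:
  assumes interp: "interpolation V f fs" and "finite J"
    and base: "tight_pair V fs S T X Y0" and "Y \<subseteq> Y0"
    and single: "\<And>y. y \<in> J \<Longrightarrow> tight_pair V fs S T X (insert y Y)"
  shows "tight_pair V fs S T X (Y0 \<union> J)"
  using \<open>finite J\<close> single
proof (induction J rule: finite_induct)
  case empty
  show ?case using base by simp
next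
  case (insert y J)
  have "tight_pair V fs S T (X \<inter> X) (insert y Y \<union> (Y0 \<union> J))"
    using insert by (intro tight_pair_meet[OF interp]) auto
  moreover have "insert y Y \<union> (Y0 \<union> J) = Y0 \<union> insert y J"
    using \<open>Y \<subseteq> Y0\<close> by auto
  ultimately show ?case by simp
qed

lemma tight_pair_Un_left:
  assumes interp: "interpolation V f fs" and "finite I"
    and base: "tight_pair V fs S T X0 Y" and "X \<subseteq> X0"
    and single: "\<And>x. x \<in> I \<Longrightarrow> tight_pair V fs S T (insert x X) Y"
  shows "tight_pair V fs S T (X0 \<union> I) Y"
  using \<open>finite I\<close> single
proof (induction I rule: finite_induct)
  case empty
  show ?case using base by simp
next
  case (insert x I)
  have "tight_pair V fs S T (insert x X \<union> (X0 \<union> I)) (Y \<inter> Y)"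
    using insert by (intro tight_pair_join[OF interp]) auto
  moreover have "insert x X \<union> (X0 \<union> I) = X0 \<union> insert x I"
    using \<open>X \<subseteq> X0\<close> by auto
  ultimately show ?case by simp
qed

lemma interpolation_increase_by_tight_pair:
  assumes interp: "interpolation V f fs" and "disj_pair V (insert x A) W"
    and CD: "tight_pair V fs S T C D" and "A \<subseteq> C" "x \<notin> C" "D \<subseteq> W"
    and raise: "fs S T < fs (insert x C) D"
  shows "fs A W < fs (insert x A) W"
proof -
  have "fs (insert x A \<inter> C) (W \<union> D) + fs (insert x A \<union> C) (W \<inter> D) \<le> fs (insert x A) W + fs C D"
    using assms(2) CD interpolation_submodular[OF interp] unfolding tight_pair_def by blast
  moreover have "insert x A \<inter> C = A" "W \<union> D = W" "insert x A \<union> C = insert x C" "W \<inter> D = D"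
    using assms(4-6) by auto
  moreover have "fs C D = fs S T"
    using CD unfolding tight_pair_def by simp
  ultimately show ?thesis using raise by simp
qed

lemma symmetric_interpolation_bound_by_tight_pairs:
  assumes sym: "symmetric_interpolation V f fs" and conn: "connectivity_function V f"
    and P: "tight_pair V fs S T (S \<union> A) T" and Q: "tight_pair V fs S T (S \<union> B) (T \<union> A)"
  shows "fs A (S \<union> T \<union> B) \<le> 2 * fs S T"
proof -
  have interp: "interpolation V f fs"
    using sym unfolding symmetric_interpolation_def by blast
  have dP: "disj_pair V (S \<union> A) T" and dQ: "disj_pair V (T \<union> A) (S \<union> B)"
    using P Q unfolding tight_pair_def disj_pair_def by auto
  have "fs (T \<union> A) (S \<union> B) = fs (S \<union> B) (T \<union> A)"
    using sym dQ unfolding symmetric_interpolation_def by blast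
  then have "fs ((S \<union> A) \<inter> (T \<union> A)) (T \<union> (S \<union> B)) + fs ((S \<union> A) \<union> (T \<union> A)) (T \<inter> (S \<union> B))
      \<le> 2 * fs S T"
    using interpolation_submodular[OF interp dP dQ] P Q unfolding tight_pair_def by simp
  moreover have "(S \<union> A) \<inter> (T \<union> A) = A" "T \<union> (S \<union> B) = S \<union> T \<union> B" "T \<inter> (S \<union> B) = {}"
    using dP dQ unfolding disj_pair_def by auto
  moreover have "0 \<le> fs ((S \<union> A) \<union> (T \<union> A)) {}"
    using dP dQ by (intro interpolation_nonneg[OF interp conn]) (auto simp: disj_pair_def)
  ultimately show ?thesis by simp
qed

locale raising_pairs =
  fixes V :: "'a set" and f :: "'a set \<Rightarrow> int" and fs :: "'a set \<Rightarrow> 'a set \<Rightarrow> int"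
    and S T :: "'a set" and a b :: "nat \<Rightarrow> 'a" and l :: nat
  assumes conn: "connectivity_function V f"
    and sym: "symmetric_interpolation V f fs"
    and S_V: "S \<subseteq> V" and T_V: "T \<subseteq> V" and S_T: "S \<inter> T = {}"
    and a_b_outside: "\<forall>i\<in>{1..l}. a i \<in> V - (S \<union> T) \<and> b i \<in> V - (S \<union> T)"
    and inj_a: "inj_on a {1..l}" and a_b_disjoint: "a ` {1..l} \<inter> b ` {1..l} = {}"
    and raise: "\<forall>i\<in>{1..l}. fs (S \<union> {a i}) (T \<union> {b i}) > fs S T"
    and flat_a_b: "\<forall>i\<in>{1..l}. \<forall>j\<in>{1..l}. i < j \<longrightarrow> fs (S \<union> {a i}) (T \<union> {b j}) = fs S T"
    and flat_b_a: "\<forall>i\<in>{1..l}. \<forall>j\<in>{1..l}. fs (S \<union> {b i}) (T \<union> {a j}) = fs S T"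
    and flat_single: "\<forall>i\<in>{1..l}. fs (S \<union> {a i}) T = fs S T \<and> fs S (T \<union> {b i}) = fs S T"
begin

lemma interp: "interpolation V f fs"
  using sym unfolding symmetric_interpolation_def by blast

lemma
  assumes "I \<subseteq> {1..l}" "J \<subseteq> {1..l}"
  shows disj_pair_a_b: "disj_pair V (S \<union> a ` I) (T \<union> b ` J)"
    and disj_pair_b_a: "disj_pair V (S \<union> b ` I) (T \<union> a ` J)"
proof -
  have "a ` I \<subseteq> V - (S \<union> T)" "b ` I \<subseteq> V - (S \<union> T)"
    "a ` J \<subseteq> V - (S \<union> T)" "b ` J \<subseteq> V - (S \<union> T)"
    using assms a_b_outside by blast+
  moreover have "a ` I \<inter> b ` J = {}" "b ` I \<inter> a ` J = {}"
    using assms a_b_disjoint by blast+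
  ultimately show "disj_pair V (S \<union> a ` I) (T \<union> b ` J)" "disj_pair V (S \<union> b ` I) (T \<union> a ` J)"
    using S_V T_V S_T unfolding disj_pair_def by auto
qed

lemma tight_a_b_iff:
  "I \<subseteq> {1..l} \<Longrightarrow> J \<subseteq> {1..l} \<Longrightarrow>
    tight_pair V fs S T (S \<union> a ` I) (T \<union> b ` J) \<longleftrightarrow> fs (S \<union> a ` I) (T \<union> b ` J) = fs S T"
  using disj_pair_a_b unfolding tight_pair_def by auto

lemma tight_a_before_b:
  assumes I: "I \<subseteq> {1..l}" and J: "J \<subseteq> {1..l}" and before: "\<forall>i\<in>I. \<forall>j\<in>J. i < j"
  shows "tight_pair V fs S T (S \<union> a ` I) (T \<union> b ` J)"
proof -
  have fin: "finite (a ` I)" "finite (b ` J)"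
    using finite_subset[OF I] finite_subset[OF J] by simp_all
  have single_a: "tight_pair V fs S T (insert (a i) S) (T \<union> b ` J)" if i: "i \<in> I" for i
  proof (rule tight_pair_Un_right[OF interp fin(2) _ subset_refl])
    show "tight_pair V fs S T (insert (a i) S) T"
      using tight_a_b_iff[of "{i}" "{}"] flat_single I i by auto
    show "tight_pair V fs S T (insert (a i) S) (insert y T)" if y: "y \<in> b ` J" for y
    proof -
      obtain j where "j \<in> J" "y = b j" using y by blast
      moreover from this have "i \<in> {1..l}" "j \<in> {1..l}" "i < j"
        using I J i before by auto
      ultimately show ?thesis
        using tight_a_b_iff[of "{i}" "{j}"] flat_a_b by simp
    qed
  qed
  have "tight_pair V fs S T S (T \<union> b ` J)"
  proof (rule tight_pair_Un_right[OF interp fin(2) _ subset_refl])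
    show "tight_pair V fs S T S T"
      using tight_a_b_iff[of "{}" "{}"] by simp
    show "tight_pair V fs S T S (insert y T)" if y: "y \<in> b ` J" for y
    proof -
      obtain j where "j \<in> J" "y = b j" using y by blast
      then show ?thesis
        using tight_a_b_iff[of "{}" "{j}"] flat_single J by auto
    qed
  qed
  then show ?thesis
    using single_a by (intro tight_pair_Un_left[OF interp fin(1) _ subset_refl]) auto
qed

lemma tight_b_a: "tight_pair V fs S T (S \<union> b ` {1..l}) (T \<union> a ` {1..l})"
proof (cases "l = 0")
  case True
  then show ?thesis
    using disj_pair_a_b[of "{}" "{}"] by (simp add: tight_pair_refl)
next
  case False
  then have one: "1 \<in> {1..l}" by simp
  have single: "tight_pair V fs S T (insert (b i) S) (insert (a j) T)"
    if "i \<in> {1..l}" "j \<in> {1..l}" for i j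
  proof -
    have "disj_pair V (insert (b i) S) (insert (a j) T)"
      using disj_pair_b_a[of "{i}" "{j}"] that by simp
    moreover have "fs (insert (b i) S) (insert (a j) T) = fs S T"
      using flat_b_a that by simp
    ultimately show ?thesis
      unfolding tight_pair_def by blast
  qed
  text \<open>\<open>(S \<union> {b\<^sub>i}, T)\<close> need not be tight, so the extensions start from \<open>a\<^sub>1\<close> and \<open>b\<^sub>1\<close>.\<close>
  have single_b: "tight_pair V fs S T (insert (b i) S) (T \<union> a ` {1..l})" if "i \<in> {1..l}" for i
  proof -
    have "tight_pair V fs S T (insert (b i) S) (insert (a 1) T \<union> a ` {1..l})"
      using single[OF that]
      by (intro tight_pair_Un_right[OF interp _ single[OF that one], where Y = T]) auto
    then show ?thesis
      using one by (simp add: insert_absorb)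
  qed
  have "tight_pair V fs S T (insert (b 1) S \<union> b ` {1..l}) (T \<union> a ` {1..l})"
    using single_b by (intro tight_pair_Un_left[OF interp _ single_b[OF one], where X = S]) auto
  then show ?thesis
    using one by (simp add: insert_absorb)
qed

lemma value_increases:
  assumes "m < l"
  shows "fs (a ` {1..m}) (S \<union> T \<union> b ` {1..l}) < fs (a ` {1..Suc m}) (S \<union> T \<union> b ` {1..l})"
proof -
  have m: "Suc m \<in> {1..l}" using assms by simp
  have a_Suc: "a ` {1..Suc m} = insert (a (Suc m)) (a ` {1..m})"
    by (simp add: atLeastAtMostSuc_conv)
  have tight: "tight_pair V fs S T (S \<union> a ` {1..m}) (T \<union> b ` {Suc m..l})"
    using assms by (intro tight_a_before_b) auto
  have "a (Suc m) \<notin> a ` {1..m}"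
    using inj_a m by (auto simp: inj_on_image_mem_iff)
  then have fresh: "a (Suc m) \<notin> S \<union> a ` {1..m}"
    using a_b_outside m by auto
  have "disj_pair V (S \<union> a ` {1..Suc m}) (T \<union> b ` {Suc m..l})"
    using assms by (intro disj_pair_a_b) auto
  then have "fs (S \<union> {a (Suc m)}) (T \<union> {b (Suc m)})
      \<le> fs (insert (a (Suc m)) (S \<union> a ` {1..m})) (T \<union> b ` {Suc m..l})"
    using assms unfolding a_Suc by (intro interpolation_mono[OF interp]) auto
  then have "fs S T < fs (insert (a (Suc m)) (S \<union> a ` {1..m})) (T \<union> b ` {Suc m..l})"
    using raise m by fastforce
  moreover have "disj_pair V (insert (a (Suc m)) (a ` {1..m})) (S \<union> T \<union> b ` {1..l})"
    using disj_pair_a_b[of "{1..Suc m}" "{1..l}"] disj_pair_b_a[of "{1..l}" "{1..Suc m}"] m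
    unfolding a_Suc disj_pair_def by auto
  ultimately have "fs (a ` {1..m}) (S \<union> T \<union> b ` {1..l})
      < fs (insert (a (Suc m)) (a ` {1..m})) (S \<union> T \<union> b ` {1..l})"
    using fresh by (intro interpolation_increase_by_tight_pair[OF interp _ tight]) auto
  then show ?thesis
    unfolding a_Suc .
qed

lemma value_lower_bound: "m \<le> l \<Longrightarrow> int m \<le> fs (a ` {1..m}) (S \<union> T \<union> b ` {1..l})"
proof (induction m)
  case 0
  have "disj_pair V {} (S \<union> T \<union> b ` {1..l})"
    using S_V T_V a_b_outside unfolding disj_pair_def by auto
  then show ?case
    using interpolation_nonneg[OF interp conn] by simp
next
  case (Suc m)
  then show ?case
    using value_increases[of m] by fastforce
qed

end

theorem lemma4p1:
  fixes V :: "'a set" and f :: "'a set \<Rightarrow> int" and fs :: "'a set \<Rightarrow> 'a set \<Rightarrow> int"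
    and S T :: "'a set" and a b :: "nat \<Rightarrow> 'a" and l :: nat
  assumes "finite V"
    and "connectivity_function V f"
    and "symmetric_interpolation V f fs"
    and "S \<subseteq> V" and "T \<subseteq> V" and "S \<inter> T = {}"
    and "\<forall>i\<in>{1..l}. a i \<in> V - (S \<union> T) \<and> b i \<in> V - (S \<union> T)"
    and "inj_on a {1..l}" and "inj_on b {1..l}" and "a ` {1..l} \<inter> b ` {1..l} = {}"
    and "\<forall>i\<in>{1..l}. fs (S \<union> {a i}) (T \<union> {b i}) > fs S T"
    and "\<forall>i\<in>{1..l}. \<forall>j\<in>{1..l}. i < j \<longrightarrow> fs (S \<union> {a i}) (T \<union> {b j}) = fs S T"
    and "\<forall>i\<in>{1..l}. \<forall>j\<in>{1..l}. fs (S \<union> {b i}) (T \<union> {a j}) = fs S T"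
    and "\<forall>i\<in>{1..l}. fs (S \<union> {a i}) T = fs S T \<and> fs S (T \<union> {b i}) = fs S T"
  shows "int l \<le> 2 * fs S T"
proof -
  interpret raising_pairs V f fs S T a b l
    using assms by unfold_locales
  have "int l \<le> fs (a ` {1..l}) (S \<union> T \<union> b ` {1..l})"
    by (rule value_lower_bound) simp
  also have "\<dots> \<le> 2 * fs S T"
    using tight_a_before_b[of "{1..l}" "{}"] tight_b_a
    by (intro symmetric_interpolation_bound_by_tight_pairs[OF sym conn]) simp_all
  finally show ?thesis .
qed

end
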